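(* Fix positive integers $\ell,m$. Let $F\subset\mathbb{R}[x]$ be an infinite set of polynomials. Suppose each $f\in F$ is a sum of $\ell$ squares of polynomials each having at most $m$ monomial terms, and that all nonzero coefficients of all $f\in F$ belong to a fixed finite set $C\subset\mathbb{R}$. Then there exist infinitely many distinct $f_1,f_2,\ldots\in F$, matrices $P_1,P_2,\ldots\in\mathbb{N}^{\ell\times m}$, and a single family of real numbers $(\bar a_{ij})$ such that for all $k$, $$f_k=S_{P_k}(x)\big|_{a_{ij}=\bar a_{ij}}.$$
   Context: For $P=(p_{ij})\in\mathbb{N}^{\ell\times m}$ and indeterminates $a_{ij}$, define $$S_P(x):=\sum_{i=1}^\ell\Big(\sum_{j=1}^m a_{ij}x^{p_{ij}}\Big)^2\in\mathbb{N}[a_{ij}][x].$$ The exponent matrices may be taken ordered so that $p_{11}\ge p_{21}\ge\cdots\ge p_{\ell1}$ and $p_{ij}>p_{i(j+1)}$. *)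

theory Defs
  imports "HOL-Computational_Algebra.Polynomial"
begin

text \<open>S_P(x) with the indeterminates a_ij specialised to real values a i j;
  P i j is the exponent p_ij (indices i < l, j < m, 0-based).\<close>
definition S_P :: "nat \<Rightarrow> nat \<Rightarrow> (nat \<Rightarrow> nat \<Rightarrow> nat) \<Rightarrow> (nat \<Rightarrow> nat \<Rightarrow> real) \<Rightarrow> real poly" where
  "S_P l m P a = (\<Sum>i<l. (\<Sum>j<m. monom (a i j) (P i j))^2)"

definition num_terms :: "real poly \<Rightarrow> nat" where
  "num_terms g = card {n. coeff g n \<noteq> 0}"

definition sos_sparse :: "nat \<Rightarrow> nat \<Rightarrow> real poly \<Rightarrow> bool" where
  "sos_sparse l m f = (\<exists>g :: nat \<Rightarrow> real poly.
      (\<forall>i<l. num_terms (g i) \<le> m) \<and> f = (\<Sum>i<l. (g i)^2))"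

definition ordered_exps :: "nat \<Rightarrow> nat \<Rightarrow> (nat \<Rightarrow> nat \<Rightarrow> nat) \<Rightarrow> bool" where
  "ordered_exps l m P = ((\<forall>i. Suc i < l \<longrightarrow> P (Suc i) 0 \<le> P i 0) \<and>
      (\<forall>i<l. \<forall>j. Suc j < m \<longrightarrow> P i (Suc j) < P i j))"

end

theory Submission
  imports Defs "HOL-Library.FuncSet"
begin

(* Every f in F has a representation f = S_P(P_f, a_f) with an ordered
   exponent matrix P_f; the coefficients a_f are arbitrary reals.  Expanding the squares,
   S_P(P,a) = sum over triples t = (i,j,j') of  a_ij a_ij' x^(p_ij + p_ij'), so the
   coefficients of S_P(P,a) depend on P only through the "coincidence pattern" of the
   exponent sums p_ij + p_ij' over all triples.  Attach to each f its profile: this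
   pattern together with the coefficients of f at the exponent sums of P_f.  Since the
   coefficients of f lie in the finite set C (or are 0), there are finitely many profiles,
   so by pigeonhole infinitely many f share the profile of a fixed f0.  For these f the
   transfer lemma S_P_same_profile shows f = S_P(P_f, a_f0), so a_f0 serves as the single
   coefficient family. *)

lemma decreasing_enumeration:
  fixes E :: "nat set"
  assumes "finite E" and "card E = m"
  shows "\<exists>p. bij_betw p {..<m} E \<and> (\<forall>j. Suc j < m \<longrightarrow> p (Suc j) < p j)"
proof -
  define R where "R = rev (sorted_list_of_set E)"
  have lenR: "length R = m" and setR: "set R = E" and distR: "distinct R"
    using assms unfolding R_def by simp_all
  have strict: "sorted_wrt (<) (sorted_list_of_set E)" by simp
  have "R ! Suc j < R ! j" if j: "Suc j < m" for j
  proof -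
    have "sorted_list_of_set E ! (m - Suc (Suc j)) < sorted_list_of_set E ! (m - Suc j)"
      using sorted_wrt_nth_less[OF strict, of "m - Suc (Suc j)" "m - Suc j"] j assms by simp
    thus ?thesis unfolding R_def using j assms by (simp add: rev_nth)
  qed
  moreover have "bij_betw ((!) R) {..<m} E"
    using bij_betw_nth[OF distR] lenR setR by simp
  ultimately show ?thesis by blast
qed

lemma sparse_poly_as_monomial_sum:
  fixes g :: "'a::comm_monoid_add poly"
  assumes "card {n. coeff g n \<noteq> 0} \<le> m"
  shows "\<exists>p b. (\<forall>j. Suc j < m \<longrightarrow> p (Suc j) < p j) \<and> g = (\<Sum>j<m. monom (b j) (p j))"
proof -
  define S where "S = {n. coeff g n \<noteq> 0}"
  have S_le_deg: "S \<subseteq> {..degree g}" unfolding S_def using le_degree by auto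
  hence finS: "finite S" by (rule finite_subset) simp
  (* pad the support with unused exponents above the degree to reach exactly m *)
  define D where "D = {Suc (degree g)..<Suc (degree g) + (m - card S)}"
  define E where "E = S \<union> D"
  have disj: "S \<inter> D = {}" using S_le_deg unfolding D_def by auto
  have finE: "finite E" unfolding E_def D_def using finS by simp
  have cardE: "card E = m"
    using card_Un_disjoint[OF finS _ disj] assms unfolding E_def D_def S_def[symmetric] by simp
  obtain p where p: "bij_betw p {..<m} E" "\<forall>j. Suc j < m \<longrightarrow> p (Suc j) < p j"
    using decreasing_enumeration[OF finE cardE] by blast
  have "g = (\<Sum>e\<in>E. monom (coeff g e) e)"
  proof (rule poly_eqI)
    fix n
    have "coeff (\<Sum>e\<in>E. monom (coeff g e) e) n = (\<Sum>e\<in>E. if e = n then coeff g e else 0)"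
      by (simp add: coeff_sum coeff_monom)
    also have "\<dots> = (if n \<in> E then coeff g n else 0)"
      using finE by (simp add: sum.delta)
    also have "\<dots> = coeff g n" unfolding E_def S_def by auto
    finally show "coeff g n = coeff (\<Sum>e\<in>E. monom (coeff g e) e) n" by simp
  qed
  also have "\<dots> = (\<Sum>j<m. monom (coeff g (p j)) (p j))"
    using sum.reindex_bij_betw[OF p(1), of "\<lambda>e. monom (coeff g e) e"] by simp
  finally show ?thesis
    using p(2) by (intro exI[of _ p] exI[of _ "\<lambda>j. coeff g (p j)"]) simp
qed

lemma decreasing_permutation:
  fixes key :: "nat \<Rightarrow> 'a::linorder"
  shows "\<exists>\<sigma>. bij_betw \<sigma> {..<l} {..<l} \<and> (\<forall>i. Suc i < l \<longrightarrow> key (\<sigma> (Suc i)) \<le> key (\<sigma> i))"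
proof -
  define ys where "ys = sort_key key [0..<l]"
  define xs where "xs = rev ys"
  have len: "length ys = l" "length xs = l" and set_xs: "set xs = {..<l}"
    and dist: "distinct xs" and sorted: "sorted (map key ys)"
    unfolding xs_def ys_def by auto
  have "key (xs ! Suc i) \<le> key (xs ! i)" if i: "Suc i < l" for i
  proof -
    have "map key ys ! (l - Suc (Suc i)) \<le> map key ys ! (l - Suc i)"
      using sorted_nth_mono[OF sorted] i len by simp
    thus ?thesis unfolding xs_def using i len by (simp add: rev_nth)
  qed
  moreover have "bij_betw ((!) xs) {..<l} {..<l}"
    using bij_betw_nth[OF dist] len set_xs by simp
  ultimately show ?thesis by blast
qed

lemma sos_sparse_ordered_rep:
  assumes "sos_sparse l m f"
  shows "\<exists>P a. ordered_exps l m P \<and> f = S_P l m P a"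
proof -
  obtain g where g_sparse: "\<forall>i<l. num_terms (g i) \<le> m" and f_eq: "f = (\<Sum>i<l. (g i)^2)"
    using assms unfolding sos_sparse_def by blast
  have "\<forall>i. \<exists>p b. i < l \<longrightarrow> (\<forall>j. Suc j < m \<longrightarrow> p (Suc j) < p j) \<and>
                    g i = (\<Sum>j<m. monom (b j) (p j))"
    using g_sparse sparse_poly_as_monomial_sum unfolding num_terms_def by blast
  then obtain p b where rows: "\<And>i. i < l \<Longrightarrow> (\<forall>j. Suc j < m \<longrightarrow> p i (Suc j) < p i j)"
      "\<And>i. i < l \<Longrightarrow> g i = (\<Sum>j<m. monom (b i j) (p i j))"
    by metis
  obtain \<sigma> where \<sigma>: "bij_betw \<sigma> {..<l} {..<l}" "\<forall>i. Suc i < l \<longrightarrow> p (\<sigma> (Suc i)) 0 \<le> p (\<sigma> i) 0"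
    using decreasing_permutation[where key="\<lambda>i. p i 0" and l=l] by blast
  have \<sigma>_range: "\<sigma> i < l" if "i < l" for i
    using bij_betwE[OF \<sigma>(1)] that by blast
  have "ordered_exps l m (\<lambda>i. p (\<sigma> i))"
    unfolding ordered_exps_def using \<sigma>(2) rows(1)[OF \<sigma>_range] by auto
  moreover have "S_P l m (\<lambda>i. p (\<sigma> i)) (\<lambda>i. b (\<sigma> i)) = (\<Sum>i<l. (g (\<sigma> i))^2)"
    unfolding S_P_def using rows(2)[OF \<sigma>_range] by simp
  moreover have "\<dots> = f"
    unfolding f_eq by (rule sum.reindex_bij_betw[OF \<sigma>(1)])
  ultimately show ?thesis by metis
qed

text \<open>Index triples (i,j,j') of the expanded squares, with the exponent p_ij + p_ij'
  and the coefficient a_ij a_ij' of the corresponding product term.\<close>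
definition triples :: "nat \<Rightarrow> nat \<Rightarrow> (nat \<times> nat \<times> nat) set" where
  "triples l m = {..<l} \<times> {..<m} \<times> {..<m}"

definition cross_exp :: "(nat \<Rightarrow> nat \<Rightarrow> nat) \<Rightarrow> nat \<times> nat \<times> nat \<Rightarrow> nat" where
  "cross_exp P = (\<lambda>(i, j, j'). P i j + P i j')"

definition cross_coeff :: "(nat \<Rightarrow> nat \<Rightarrow> real) \<Rightarrow> nat \<times> nat \<times> nat \<Rightarrow> real" where
  "cross_coeff a = (\<lambda>(i, j, j'). a i j * a i j')"

definition exp_pattern :: "nat \<Rightarrow> nat \<Rightarrow> (nat \<Rightarrow> nat \<Rightarrow> nat) \<Rightarrow> ((nat \<times> nat \<times> nat) \<times> (nat \<times> nat \<times> nat)) set" where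
  "exp_pattern l m P = {(t, t'). t \<in> triples l m \<and> t' \<in> triples l m \<and> cross_exp P t = cross_exp P t'}"

lemma finite_triples [simp]: "finite (triples l m)"
  unfolding triples_def by simp

lemma S_P_expand: "S_P l m P a = (\<Sum>t\<in>triples l m. monom (cross_coeff a t) (cross_exp P t))"
proof -
  have "(\<Sum>j<m. monom (a i j) (P i j))^2 =
        (\<Sum>(j, j')\<in>{..<m} \<times> {..<m}. monom (a i j * a i j') (P i j + P i j'))" for i
    by (simp add: power2_eq_square sum_product mult_monom sum.cartesian_product)
  thus ?thesis
    unfolding S_P_def triples_def cross_coeff_def cross_exp_def
    by (simp add: sum.cartesian_product split_def)
qed

lemma coeff_S_P:
  "coeff (S_P l m P a) n = (\<Sum>t\<in>{t\<in>triples l m. cross_exp P t = n}. cross_coeff a t)"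
  by (simp add: S_P_expand coeff_sum coeff_monom sum.inter_filter)

definition profile :: "nat \<Rightarrow> nat \<Rightarrow> (nat \<Rightarrow> nat \<Rightarrow> nat) \<Rightarrow> real poly \<Rightarrow>
    ((nat \<times> nat \<times> nat) \<times> (nat \<times> nat \<times> nat)) set \<times> (nat \<times> nat \<times> nat \<Rightarrow> real)" where
  "profile l m P f = (exp_pattern l m P, restrict (\<lambda>t. coeff f (cross_exp P t)) (triples l m))"

text \<open>Indeed every
  coefficient of S_P(P,b) is a sum over a class of triples that the equal patterns
  identify with a class for Q, where it gives the matching coefficient of f0.\<close>
lemma S_P_same_profile:
  assumes same: "profile l m P f = profile l m Q f0"
    and f: "S_P l m P a = f" and f0: "S_P l m Q b = f0"
  shows "S_P l m P b = f"
proof (rule poly_eqI)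
  fix n
  have pattern: "exp_pattern l m P = exp_pattern l m Q"
    using same unfolding profile_def by simp
  have coeffs: "coeff f (cross_exp P t) = coeff f0 (cross_exp Q t)" if "t \<in> triples l m" for t
    using arg_cong[OF same, of "\<lambda>x. snd x t"] that unfolding profile_def by simp
  show "coeff (S_P l m P b) n = coeff f n"
  proof (cases "\<exists>t0\<in>triples l m. cross_exp P t0 = n")
    case True
    then obtain t0 where t0: "t0 \<in> triples l m" "cross_exp P t0 = n" by blast
    have "{t\<in>triples l m. cross_exp P t = n} = {t\<in>triples l m. cross_exp Q t = cross_exp Q t0}"
      using pattern t0 unfolding exp_pattern_def by (auto dest: eqset_imp_iff[of _ _ "(_, t0)"])
    hence "coeff (S_P l m P b) n = coeff (S_P l m Q b) (cross_exp Q t0)"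
      by (simp add: coeff_S_P)
    thus ?thesis using coeffs[OF t0(1)] t0(2) f0 by simp
  next
    case False
    hence none: "{t\<in>triples l m. cross_exp P t = n} = {}" by auto
    have "coeff (S_P l m P b) n = 0" "coeff (S_P l m P a) n = 0"
      by (simp_all only: coeff_S_P none sum.empty)
    thus ?thesis using f by simp
  qed
qed

lemma infinite_fibre_sequence:
  fixes F :: "'a set"
  assumes "infinite F" and "finite (h ` F)"
  shows "\<exists>(fs :: nat \<Rightarrow> 'a) f0. inj fs \<and> f0 \<in> F \<and> (\<forall>k. fs k \<in> F \<and> h (fs k) = h f0)"
proof -
  obtain f0 where f0: "f0 \<in> F" and fibre: "infinite {f\<in>F. h f = h f0}"
    using pigeonhole_infinite[OF assms] by blast
  then obtain fs :: "nat \<Rightarrow> 'a" where "inj fs" and "range fs \<subseteq> {f\<in>F. h f = h f0}"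
    using infinite_iff_countable_subset by metis
  thus ?thesis using f0 by blast
qed

lemma finite_profiles:
  assumes "finite C" and "\<And>f n. f \<in> F \<Longrightarrow> coeff f n \<noteq> 0 \<Longrightarrow> coeff f n \<in> C"
  shows "finite ((\<lambda>f. profile l m (P f) f) ` F)"
proof (rule finite_subset)
  show "finite (Pow (triples l m \<times> triples l m) \<times> (triples l m \<rightarrow>\<^sub>E insert 0 C))"
    by (intro finite_cartesian_product finite_PiE) (simp_all add: assms(1))
  have "restrict (\<lambda>t. coeff f (cross_exp (P f) t)) (triples l m) \<in> triples l m \<rightarrow>\<^sub>E insert 0 C"
    if "f \<in> F" for f
  proof -
    have "coeff f n \<in> insert 0 C" for n using assms(2)[OF that] by blast
    thus ?thesis by (simp add: restrict_PiE_iff)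
  qed
  moreover have "exp_pattern l m Q \<in> Pow (triples l m \<times> triples l m)" for Q
    unfolding exp_pattern_def by blast
  ultimately show "(\<lambda>f. profile l m (P f) f) ` F
        \<subseteq> Pow (triples l m \<times> triples l m) \<times> (triples l m \<rightarrow>\<^sub>E insert 0 C)"
    unfolding profile_def by (auto simp only: mem_Times_iff fst_conv snd_conv)
qed

theorem lemma4p2:
  fixes l m :: nat and F :: "real poly set" and C :: "real set"
  assumes "l > 0" and "m > 0"
    and "infinite F"
    and "\<forall>f\<in>F. sos_sparse l m f"
    and "finite C"
    and "\<forall>f\<in>F. \<forall>n. coeff f n \<noteq> 0 \<longrightarrow> coeff f n \<in> C"
  shows "\<exists>(fs :: nat \<Rightarrow> real poly) (Ps :: nat \<Rightarrow> nat \<Rightarrow> nat \<Rightarrow> nat) (abar :: nat \<Rightarrow> nat \<Rightarrow> real).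
           inj fs \<and> (\<forall>k. fs k \<in> F) \<and> (\<forall>k. ordered_exps l m (Ps k)) \<and>
           (\<forall>k. fs k = S_P l m (Ps k) abar)"
proof -
  have "\<forall>f. \<exists>P a. f \<in> F \<longrightarrow> ordered_exps l m P \<and> f = S_P l m P a"
    using sos_sparse_ordered_rep assms(4) by blast
  then obtain P a where rep: "\<And>f. f \<in> F \<Longrightarrow> ordered_exps l m (P f)"
      "\<And>f. f \<in> F \<Longrightarrow> S_P l m (P f) (a f) = f"
    by metis
  have "finite ((\<lambda>f. profile l m (P f) f) ` F)"
    using finite_profiles assms(5,6) by blast
  then obtain fs :: "nat \<Rightarrow> real poly" and f0 where fs: "inj fs" "f0 \<in> F" "\<And>k. fs k \<in> F"
      "\<And>k. profile l m (P (fs k)) (fs k) = profile l m (P f0) f0"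
    using infinite_fibre_sequence[OF assms(3)] by blast
  have "S_P l m (P (fs k)) (a f0) = fs k" for k
    using S_P_same_profile[OF fs(4) rep(2)[OF fs(3)] rep(2)[OF fs(2)]] .
  thus ?thesis using fs(1,3) rep(1)
    by (intro exI[of _ fs] exI[of _ "\<lambda>k. P (fs k)"] exI[of _ "a f0"]) auto
qed

end
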